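(* Let $H$ be a graph with $1\le\delta(H)\le|V(H)|-2$ and let $\{\mathcal H_i\}_{i=1}^s$ be a $d$-sequence of $H$ with $Z=\min\{z_i(H): 2\le i\le s\}\le 0$. Let $T$ be a forest without isolated vertices of order at least $3$, let $P_T$ be the set of pendant vertices of $T$ adjacent to a vertex of degree at least $2$, and let $G=H+T$. If $|P_T|-|N_T(P_T)|\ge d_H-Z$, then $str(G)=|V(G)|+1$.
   Context: For a graph $G$ of order $p$, a numbering is a bijection $f:V(G)\to[1,p]$; $str_f(G)=\max\{f(u)+f(v): uv\in E(G)\}$ and $str(G)=\min_f str_f(G)$. $G+H$ is disjoint union; $N_T(S)$ is the set of all neighbours in $T$ of vertices of $S$; a pendant vertex has degree 1; $mK_1$ is the edgeless graph on $m$ vertices; $K_r$ the complete graph. $d$-sequence: Let $G$ have order $p$ with $1\le\delta(G)\le p-2$. Set $\mathcal G_1=G_1=G$, $m_1=0$. For each $i$, write $\mathcal G_i=m_iK_1+G_i$, where $m_i\ge0$ is the number of isolated vertices of $\mathcal G_i$ and $G_i$ has no isolated vertices. If $\mathcal G_i$ is neither of the form $mK_1$ ($m\ge1$) nor $mK_1+K_r$ ($m\ge0$, $r\ge2$), choose any vertex $u_i$ of $G_i$, put $d_i=\deg_{G_i}(u_i)$, and let $\mathcal G_{i+1}$ be obtained from $G_i$ by deleting $u_i$ together with all its neighbours in $G_i$. Stop at the first index $s$ ($s\ge 2$) for which $\mathcal G_s$ is $m_sK_1$ with $m_s\ge1$ (then set $d_s=0$) or $m_sK_1+K_r$ with $m_s\ge0$,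 $r\ge2$ (then $d_s=r-1$). The sequence $\{\mathcal G_i\}_{i=1}^s$ is a $d$-sequence of $G$. Write $d_G=d_1$, $y_j(G)=m_j+1-d_j$ and $z_i(G)=\sum_{j=2}^i y_j(G)$ for $2\le i\le s$. *)

theory Defs
  imports Main
begin

type_synonym 'a graph = "'a set \<times> 'a set set"

definition is_graph :: "'a graph \<Rightarrow> bool" where
  "is_graph G \<longleftrightarrow> finite (fst G) \<and>
     (\<forall>e\<in>snd G. \<exists>u v. e = {u, v} \<and> u \<noteq> v \<and> u \<in> fst G \<and> v \<in> fst G)"

definition deg :: "'a graph \<Rightarrow> 'a \<Rightarrow> nat" where
  "deg G v = card {u. {u, v} \<in> snd G}"

definition min_deg :: "'a graph \<Rightarrow> nat" where
  "min_deg G = Min (deg G ` fst G)"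

definition isolated :: "'a graph \<Rightarrow> 'a set" where
  "isolated G = {v \<in> fst G. \<forall>u. {u, v} \<notin> snd G}"

definition nonisol :: "'a graph \<Rightarrow> 'a set" where
  "nonisol G = fst G - isolated G"

definition nbhd_set :: "'a graph \<Rightarrow> 'a set \<Rightarrow> 'a set" where
  "nbhd_set G S = {u \<in> fst G. \<exists>v\<in>S. {u, v} \<in> snd G}"

definition closed_nbhd :: "'a graph \<Rightarrow> 'a \<Rightarrow> 'a set" where
  "closed_nbhd G u = insert u {v. {u, v} \<in> snd G}"

definition dstep :: "'a graph \<Rightarrow> 'a \<Rightarrow> 'a graph" where
  "dstep G u = (let W = nonisol G - closed_nbhd G u in (W, {e \<in> snd G. e \<subseteq> W}))"

text \<open>G is of the form m K_1 (m \<ge> 1) or m K_1 + K_r (m \<ge> 0, r \<ge> 2).\<close>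
definition stop_form :: "'a graph \<Rightarrow> bool" where
  "stop_form G \<longleftrightarrow> (snd G = {} \<and> fst G \<noteq> {}) \<or>
     (nonisol G \<noteq> {} \<and> (\<forall>u\<in>nonisol G. \<forall>v\<in>nonisol G. u \<noteq> v \<longrightarrow> {u, v} \<in> snd G))"

definition stop_d :: "'a graph \<Rightarrow> nat" where
  "stop_d G = (if snd G = {} then 0 else card (nonisol G) - 1)"

text \<open>Gs i is the graph \<G>_i (i = 1..s), us i is the chosen vertex u_i (i < s).\<close>
definition is_dseq :: "'a graph \<Rightarrow> nat \<Rightarrow> (nat \<Rightarrow> 'a graph) \<Rightarrow> (nat \<Rightarrow> 'a) \<Rightarrow> bool" where
  "is_dseq G s Gs us \<longleftrightarrow> 2 \<le> s \<and> Gs 1 = G \<and>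
     (\<forall>i. 1 \<le> i \<and> i < s \<longrightarrow> \<not> stop_form (Gs i) \<and> us i \<in> nonisol (Gs i) \<and>
                          Gs (Suc i) = dstep (Gs i) (us i)) \<and>
     stop_form (Gs s)"

definition dval :: "nat \<Rightarrow> (nat \<Rightarrow> 'a graph) \<Rightarrow> (nat \<Rightarrow> 'a) \<Rightarrow> nat \<Rightarrow> nat" where
  "dval s Gs us i = (if i < s then deg (Gs i) (us i) else stop_d (Gs s))"

definition mval :: "(nat \<Rightarrow> 'a graph) \<Rightarrow> nat \<Rightarrow> nat" where
  "mval Gs i = card (isolated (Gs i))"

definition yval :: "nat \<Rightarrow> (nat \<Rightarrow> 'a graph) \<Rightarrow> (nat \<Rightarrow> 'a) \<Rightarrow> nat \<Rightarrow> int" where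
  "yval s Gs us j = int (mval Gs j) + 1 - int (dval s Gs us j)"

definition zval :: "nat \<Rightarrow> (nat \<Rightarrow> 'a graph) \<Rightarrow> (nat \<Rightarrow> 'a) \<Rightarrow> nat \<Rightarrow> int" where
  "zval s Gs us i = (\<Sum>j = 2..i. yval s Gs us j)"

definition Zmin :: "nat \<Rightarrow> (nat \<Rightarrow> 'a graph) \<Rightarrow> (nat \<Rightarrow> 'a) \<Rightarrow> int" where
  "Zmin s Gs us = Min (zval s Gs us ` {2..s})"

definition is_cycle :: "'a graph \<Rightarrow> 'a list \<Rightarrow> bool" where
  "is_cycle G xs \<longleftrightarrow> 3 \<le> length xs \<and> distinct xs \<and> set xs \<subseteq> fst G \<and>
     (\<forall>i < length xs. {xs ! i, xs ! ((i + 1) mod length xs)} \<in> snd G)"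

definition is_forest :: "'a graph \<Rightarrow> bool" where
  "is_forest G \<longleftrightarrow> is_graph G \<and> (\<nexists>xs. is_cycle G xs)"

definition pendant_P :: "'a graph \<Rightarrow> 'a set" where
  "pendant_P T = {v \<in> fst T. deg T v = 1 \<and> (\<exists>u. {u, v} \<in> snd T \<and> 2 \<le> deg T u)}"

definition disj_union :: "'a graph \<Rightarrow> 'a graph \<Rightarrow> 'a graph" where
  "disj_union H T = (fst H \<union> fst T, snd H \<union> snd T)"

definition numbering :: "'a graph \<Rightarrow> ('a \<Rightarrow> nat) \<Rightarrow> bool" where
  "numbering G f \<longleftrightarrow> bij_betw f (fst G) {1..card (fst G)}"

definition str_f :: "'a graph \<Rightarrow> ('a \<Rightarrow> nat) \<Rightarrow> nat" where
  "str_f G f = Max {f u + f v | u v. {u, v} \<in> snd G}"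

definition strength :: "'a graph \<Rightarrow> nat" where
  "strength G = (LEAST k. \<exists>f. numbering G f \<and> str_f G f = k)"

end

theory Submission
  imports Defs
begin

(* Every numbering of a graph without isolated vertices has strength at least p + 1, since the
   vertex numbered p has a neighbour; so it suffices to find a numbering with all edge sums at
   most p + 1.

   A d-sequence splits V(H) into tops (the chosen vertices u_i and the vertices that become
   isolated) and bottoms (the neighbours of the u_i), arranged in slots; the tops are
   independent and every neighbour of a top is a bottom of no larger slot. The pendant vertices
   of T are further tops and their supports further bottoms, placed below all of H. Numbering
   the bottoms from below and the tops from above, both in slot order, is good as long as at
   every threshold the bottoms outnumber the tops by at most one. The d-sequence contributes a
   deficit of at most d_H - Z there, and the surplus |P_T| - |N_T(P_T)| of pendant vertices
   over supports covers it.

   The remaining vertices of T induce a forest, which has such a numbering by leaf removal; it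
   is spliced in right after the labels of the bottoms. *)

lemma is_graph_edgeD:
  assumes "is_graph G" "{x, y} \<in> snd G"
  shows "x \<noteq> y \<and> x \<in> fst G \<and> y \<in> fst G"
proof -
  obtain u v where "{x, y} = {u, v}" "u \<noteq> v" "u \<in> fst G" "v \<in> fst G"
    using assms unfolding is_graph_def by blast
  then show ?thesis by (auto simp: doubleton_eq_iff)
qed

lemma is_graph_edge_subset:
  assumes "is_graph G" "e \<in> snd G"
  shows "e \<subseteq> fst G"
proof -
  obtain u v where "e = {u, v}" "u \<in> fst G" "v \<in> fst G" using assms unfolding is_graph_def by blast
  then show ?thesis by simp
qed

definition induced_subgraph :: "'a graph \<Rightarrow> 'a set \<Rightarrow> 'a graph" where
  "induced_subgraph G W = (W, {e \<in> snd G. e \<subseteq> W})"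

lemma is_forest_induced_subgraph:
  assumes "is_forest G" "W \<subseteq> fst G"
  shows "is_forest (induced_subgraph G W)"
proof -
  have graph: "is_graph G" using assms(1) unfolding is_forest_def by simp
  have "is_graph (induced_subgraph G W)"
    unfolding is_graph_def induced_subgraph_def fst_conv snd_conv
  proof (intro conjI ballI)
    show "finite W" using graph assms(2) unfolding is_graph_def by (auto intro: finite_subset)
    fix e assume e: "e \<in> {e \<in> snd G. e \<subseteq> W}"
    then obtain u v where "e = {u, v}" "u \<noteq> v" using graph unfolding is_graph_def by blast
    then show "\<exists>u v. e = {u, v} \<and> u \<noteq> v \<and> u \<in> W \<and> v \<in> W" using e by blast
  qed
  moreover have "is_cycle G xs" if "is_cycle (induced_subgraph G W) xs" for xs
  proof -
    have "set xs \<subseteq> W" "\<forall>i < length xs. {xs ! i, xs ! ((i + 1) mod length xs)} \<in> snd G"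
      using that unfolding is_cycle_def induced_subgraph_def by auto
    then show ?thesis using that assms(2) unfolding is_cycle_def by auto
  qed
  ultimately show ?thesis using assms(1) unfolding is_forest_def by blast
qed

lemma is_graph_disj_union:
  assumes "is_graph H" "is_graph T"
  shows "is_graph (disj_union H T)"
  unfolding is_graph_def disj_union_def fst_conv snd_conv
proof (intro conjI ballI)
  show "finite (fst H \<union> fst T)" using assms unfolding is_graph_def by simp
  fix e assume "e \<in> snd H \<union> snd T"
  then obtain u v where "e = {u, v}" "u \<noteq> v" "u \<in> fst H \<union> fst T" "v \<in> fst H \<union> fst T"
    using assms unfolding is_graph_def by (metis UnCI UnE)
  then show "\<exists>u v. e = {u, v} \<and> u \<noteq> v \<and> u \<in> fst H \<union> fst T \<and> v \<in> fst H \<union> fst T" by blast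
qed

lemma isolated_disj_union_subset: "isolated (disj_union H T) \<subseteq> isolated H \<union> isolated T"
  unfolding isolated_def disj_union_def fst_conv snd_conv by blast

lemma isolated_eq_empty_if_min_deg_pos:
  assumes "is_graph H" "1 \<le> min_deg H"
  shows "isolated H = {}"
proof -
  have False if "v \<in> isolated H" for v
  proof -
    have "v \<in> fst H" "{u. {u, v} \<in> snd H} = {}" using that unfolding isolated_def by auto
    moreover have "min_deg H \<le> deg H v"
      unfolding min_deg_def using assms(1) \<open>v \<in> fst H\<close> by (intro Min_le) (auto simp: is_graph_def)
    ultimately show False using assms(2) unfolding deg_def by simp
  qed
  then show ?thesis by blast
qed

lemma bij_betw_atLeastAtMost_if_inj_card:
  assumes "finite A" "inj_on f A" "f ` A \<subseteq> {1..n}" "card A = n"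
  shows "bij_betw f A {1..(n::nat)}"
proof -
  have "card (f ` A) = n" using assms card_image by metis
  then have "f ` A = {1..n}" using assms(3) by (simp add: card_subset_eq)
  then show ?thesis using assms(2) by (simp add: bij_betw_def)
qed

lemma card_preimage_bij_betw:
  assumes "bij_betw g S T"
  shows "card {y\<in>S. g y \<in> A} = card (A \<inter> T)"
proof -
  have "inj_on g {y\<in>S. g y \<in> A}"
    using assms by (auto simp: bij_betw_def intro: inj_on_subset)
  moreover have "g ` {y\<in>S. g y \<in> A} = A \<inter> T"
    using assms unfolding bij_betw_def by blast
  ultimately show ?thesis using card_image by fastforce
qed

lemma monotone_numbering_exists:
  fixes \<sigma> :: "'a \<Rightarrow> nat"
  assumes "finite S"
  shows "\<exists>g. bij_betw g S {1..card S} \<and> (\<forall>a\<in>S. \<forall>b\<in>S. \<sigma> a < \<sigma> b \<longrightarrow> g a < g b)"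
  using assms
proof (induction "card S" arbitrary: S)
  case 0
  then show ?case by (auto simp: bij_betw_def)
next
  case (Suc n)
  then have "S \<noteq> {}" by auto
  then have "Max (\<sigma> ` S) \<in> \<sigma> ` S" using Max_in[of "\<sigma> ` S"] Suc.prems by simp
  then obtain m where m: "m \<in> S" "\<sigma> m = Max (\<sigma> ` S)" by (metis imageE)
  have m_max: "\<sigma> a \<le> \<sigma> m" if "a \<in> S" for a using m that Suc.prems by simp
  have n: "n = card (S - {m})" using Suc.hyps(2) m(1) by simp
  obtain g where g: "bij_betw g (S - {m}) {1..n}"
    "\<forall>a\<in>S-{m}. \<forall>b\<in>S-{m}. \<sigma> a < \<sigma> b \<longrightarrow> g a < g b"
    using Suc.hyps(1)[OF n] Suc.prems n by auto
  have g_range: "g a \<in> {1..n}" if "a \<in> S - {m}" for a using g(1) that by (auto simp: bij_betw_def)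
  define g' where "g' = g(m := Suc n)"
  have "inj_on g' S"
  proof (rule inj_onI)
    fix a b assume ab: "a \<in> S" "b \<in> S" "g' a = g' b"
    show "a = b"
    proof (cases "a = m \<or> b = m")
      case True
      have "g' x \<noteq> Suc n" if "x \<in> S" "x \<noteq> m" for x
        using g_range[of x] that unfolding g'_def by auto
      moreover have "g' m = Suc n" unfolding g'_def by simp
      ultimately show ?thesis using True ab by metis
    next
      case False
      then show ?thesis using ab g(1) unfolding g'_def bij_betw_def inj_on_def by auto
    qed
  qed
  moreover have "g' ` S \<subseteq> {1..card S}" using g_range Suc.hyps(2) unfolding g'_def by fastforce
  moreover have "g' a < g' b" if "a \<in> S" "b \<in> S" "\<sigma> a < \<sigma> b" for a b
  proof -
    have "a \<noteq> m" using m_max that by (metis leD)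
    then show ?thesis
      using g(2) g_range[of a] that unfolding g'_def by (cases "b = m") auto
  qed
  ultimately show ?case using bij_betw_atLeastAtMost_if_inj_card[OF Suc.prems] by blast
qed

lemma monotone_numbering_le_card:
  fixes \<sigma> :: "'a \<Rightarrow> nat"
  assumes g: "bij_betw g S {1..n}" "\<forall>a\<in>S. \<forall>b\<in>S. \<sigma> a < \<sigma> b \<longrightarrow> g a < g b"
    and "y \<in> S" "finite S"
  shows "g y \<le> card {y'\<in>S. \<sigma> y' \<le> \<sigma> y}"
proof -
  have "g y \<in> {1..n}" using g(1) assms(3) by (auto simp: bij_betw_def)
  then have "g y = card {y'\<in>S. g y' \<in> {..g y}}"
    using card_preimage_bij_betw[OF g(1), of "{..g y}"] by (simp add: Int_absorb2)
  also have "\<dots> \<le> card {y'\<in>S. \<sigma> y' \<le> \<sigma> y}"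
  proof (rule card_mono)
    show "finite {y'\<in>S. \<sigma> y' \<le> \<sigma> y}" using assms(4) by simp
    show "{y'\<in>S. g y' \<in> {..g y}} \<subseteq> {y'\<in>S. \<sigma> y' \<le> \<sigma> y}"
      using g(2) assms(3) by (auto simp: not_le[symmetric])
  qed
  finally show ?thesis .
qed

lemma card_less_monotone_numbering:
  fixes \<sigma> :: "'a \<Rightarrow> nat"
  assumes g: "bij_betw g S {1..n}" "\<forall>a\<in>S. \<forall>b\<in>S. \<sigma> a < \<sigma> b \<longrightarrow> g a < g b"
    and "y \<in> S" "finite S"
  shows "card {y'\<in>S. \<sigma> y' < \<sigma> y} < g y"
proof -
  have "g y \<in> {1..n}" using g(1) assms(3) by (auto simp: bij_betw_def)
  have "card {y'\<in>S. \<sigma> y' < \<sigma> y} \<le> card {y'\<in>S. g y' \<in> {..<g y}}"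
  proof (rule card_mono)
    show "finite {y'\<in>S. g y' \<in> {..<g y}}" using assms(4) by simp
    show "{y'\<in>S. \<sigma> y' < \<sigma> y} \<subseteq> {y'\<in>S. g y' \<in> {..<g y}}" using g(2) assms(3) by auto
  qed
  also have "\<dots> = card ({..<g y} \<inter> {1..n})" by (rule card_preimage_bij_betw[OF g(1)])
  also have "{..<g y} \<inter> {1..n} = {1..<g y}" using \<open>g y \<in> {1..n}\<close> by auto
  finally have "card {y'\<in>S. \<sigma> y' < \<sigma> y} \<le> g y - 1" by simp
  moreover have "1 \<le> g y" using \<open>g y \<in> {1..n}\<close> by simp
  ultimately show ?thesis by linarith
qed

definition tight_numbering :: "'a set \<Rightarrow> 'a set set \<Rightarrow> ('a \<Rightarrow> nat) \<Rightarrow> bool" where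
  "tight_numbering V E f \<longleftrightarrow>
     bij_betw f V {1..card V} \<and> (\<forall>x y. {x, y} \<in> E \<longrightarrow> f x + f y \<le> card V + 1)"

lemma strength_eq_if_tight_numbering:
  assumes graph: "is_graph G" and nonempty: "fst G \<noteq> {}" and no_isolated: "isolated G = {}"
    and f: "tight_numbering (fst G) (snd G) f"
  shows "strength G = card (fst G) + 1"
proof -
  define p where "p = card (fst G)"
  have fin: "finite (fst G)" using graph unfolding is_graph_def by simp
  have nbr: "\<exists>u. {u, v} \<in> snd G" if "v \<in> fst G" for v
    using no_isolated that unfolding isolated_def by blast
  have "1 \<le> p" using fin nonempty p_def by (simp add: Suc_leI card_gt_0_iff)
  have finite_sums: "finite {g a + g b | a b. {a, b} \<in> snd G}" for g :: "'a \<Rightarrow> nat"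
  proof -
    have "{g a + g b | a b. {a, b} \<in> snd G} \<subseteq> (\<lambda>(a, b). g a + g b) ` (fst G \<times> fst G)"
      using is_graph_edgeD[OF graph] by fastforce
    then show ?thesis using fin finite_subset by blast
  qed
  have lower: "p + 1 \<le> str_f G g" if g: "numbering G g" for g
  proof -
    have "p \<in> g ` fst G" using g \<open>1 \<le> p\<close> unfolding numbering_def bij_betw_def p_def by simp
    then obtain v where v: "v \<in> fst G" "g v = p" by blast
    obtain u where u: "{u, v} \<in> snd G" using nbr[OF v(1)] by blast
    have "1 \<le> g u" using g is_graph_edgeD[OF graph u] unfolding numbering_def bij_betw_def by auto
    then have "p + 1 \<le> g u + g v" using v by simp
    also have "g u + g v \<le> str_f G g"
      unfolding str_f_def using finite_sums u by (intro Max_ge) blast+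
    finally show ?thesis .
  qed
  have numbering: "numbering G f" using f unfolding tight_numbering_def numbering_def by simp
  have "str_f G f \<le> p + 1"
    unfolding str_f_def
  proof (rule Max.boundedI)
    obtain v where "v \<in> fst G" using nonempty by blast
    then obtain u where "{u, v} \<in> snd G" using nbr by blast
    then show "{f a + f b | a b. {a, b} \<in> snd G} \<noteq> {}" by blast
  qed (use finite_sums f p_def in \<open>auto simp: tight_numbering_def\<close>)
  then have "str_f G f = p + 1" using lower[OF numbering] by simp
  then show ?thesis
    unfolding strength_def p_def[symmetric]
    using numbering lower by (intro Least_equality) blast+
qed

definition edge_path :: "'a set set \<Rightarrow> 'a list \<Rightarrow> bool" where
  "edge_path E xs \<longleftrightarrow> distinct xs \<and> (\<forall>i. Suc i < length xs \<longrightarrow> {xs ! i, xs ! Suc i} \<in> E)"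

lemma is_cycle_take_edge_path:
  assumes path: "edge_path (snd G) xs" and "set xs \<subseteq> fst G"
    and j: "2 \<le> j" "j < length xs" and closing: "{xs ! j, xs ! 0} \<in> snd G"
  shows "is_cycle G (take (Suc j) xs)"
  unfolding is_cycle_def
proof (intro conjI allI impI)
  let ?cs = "take (Suc j) xs"
  have len: "length ?cs = Suc j" using j by simp
  show "3 \<le> length ?cs" using len j by simp
  show "distinct ?cs" using path unfolding edge_path_def by simp
  show "set ?cs \<subseteq> fst G" using assms(2) set_take_subset by (metis order_trans)
  fix i assume i: "i < length ?cs"
  show "{?cs ! i, ?cs ! ((i + 1) mod length ?cs)} \<in> snd G"
  proof (cases "i = j")
    case True
    then show ?thesis using len closing by simp
  next
    case False
    then have "i < j" using i len by simp
    then show ?thesis using len path j unfolding edge_path_def by simp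
  qed
qed

(* A longest path cannot be prolonged at its first vertex x, so the second neighbour of x
   lies further along the path and closes a cycle. *)
lemma cycle_if_no_leaf:
  assumes graph: "is_graph G"
    and no_leaf: "\<And>x w. {x, w} \<in> snd G \<Longrightarrow> \<exists>u. {u, x} \<in> snd G \<and> u \<noteq> w"
    and e: "{a, b} \<in> snd G"
  shows "\<exists>xs. is_cycle G xs"
proof -
  define Ps where "Ps = {xs. edge_path (snd G) xs \<and> set xs \<subseteq> fst G \<and> 2 \<le> length xs}"
  have "[a, b] \<in> Ps"
    using is_graph_edgeD[OF graph e] e unfolding Ps_def edge_path_def by (auto simp: less_Suc_eq)
  moreover have "length xs < Suc (card (fst G))" if "xs \<in> Ps" for xs
  proof -
    have "distinct xs" "set xs \<subseteq> fst G" using that unfolding Ps_def edge_path_def by auto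
    then show ?thesis using graph unfolding is_graph_def by (metis card_mono distinct_card less_Suc_eq_le)
  qed
  ultimately obtain xs where xs: "xs \<in> Ps" and longest: "\<And>ys. ys \<in> Ps \<Longrightarrow> length ys \<le> length xs"
    using ex_has_greatest_nat[of "\<lambda>xs. xs \<in> Ps" "[a, b]" length "Suc (card (fst G))"] by blast
  have path: "edge_path (snd G) xs" and sub: "set xs \<subseteq> fst G" and len: "2 \<le> length xs"
    using xs unfolding Ps_def by auto
  have "{xs ! 0, xs ! 1} \<in> snd G" using path len unfolding edge_path_def by fastforce
  then obtain u where u: "{u, xs ! 0} \<in> snd G" "u \<noteq> xs ! 1" using no_leaf by blast
  have "u \<in> set xs"
  proof (rule ccontr)
    assume "u \<notin> set xs"
    then have "u # xs \<in> Ps"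
      using path sub len u(1) is_graph_edgeD[OF graph u(1)]
      unfolding Ps_def edge_path_def by (auto simp: nth_Cons split: nat.split)
    then show False using longest by fastforce
  qed
  then obtain j where j: "j < length xs" "xs ! j = u" by (metis in_set_conv_nth)
  have "j \<noteq> 0"
  proof
    assume "j = 0"
    then show False using j is_graph_edgeD[OF graph u(1)] by simp
  qed
  moreover have "j \<noteq> 1" using j u(2) by auto
  ultimately have "2 \<le> j" by simp
  then show ?thesis using is_cycle_take_edge_path[OF path sub _ j(1)] j u(1) by blast
qed

lemma tight_numbering_extend_leaf:
  assumes fin: "finite V" and edges: "\<And>a b. {a, b} \<in> E \<Longrightarrow> a \<noteq> b \<and> a \<in> V \<and> b \<in> V"
    and xw: "x \<noteq> w" "x \<in> V" "w \<in> V" and leaf: "\<And>u. {u, x} \<in> E \<Longrightarrow> u = w"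
    and f': "tight_numbering (V - {x, w}) {e \<in> E. e \<subseteq> V - {x, w}} f'"
  shows "tight_numbering V E (\<lambda>z. if z = w then 1 else if z = x then card V else f' z + 1)"
    (is "tight_numbering V E ?f")
proof -
  define V' where "V' = V - {x, w}"
  have card_V': "card V' = card V - 2" using xw fin unfolding V'_def by (simp add: card_Diff_subset)
  have "card {x, w} \<le> card V" using fin xw by (intro card_mono) auto
  then have two: "2 \<le> card V" using xw by simp
  have range': "1 \<le> f' z \<and> f' z \<le> card V - 2" if "z \<in> V'" for z
    using f' that card_V' unfolding tight_numbering_def V'_def by (auto simp: bij_betw_def)
  have inner: "?f z = f' z + 1" if "z \<in> V'" for z using that unfolding V'_def by auto
  have cases_f: "(z = w \<and> ?f z = 1) \<or> (z = x \<and> ?f z = card V) \<or>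
      (z \<in> V' \<and> 2 \<le> ?f z \<and> ?f z \<le> card V - 1 \<and> ?f z = f' z + 1)" if "z \<in> V" for z
    using that inner[of z] range'[of z] two xw unfolding V'_def by auto
  have "inj_on ?f V"
  proof (rule inj_onI)
    fix a b assume ab: "a \<in> V" "b \<in> V" "?f a = ?f b"
    have "inj_on f' V'" using f' unfolding tight_numbering_def bij_betw_def V'_def by simp
    moreover have "a = b \<or> (a \<in> V' \<and> b \<in> V' \<and> f' a = f' b)"
      using cases_f[OF ab(1)] cases_f[OF ab(2)] ab(3) two by auto
    ultimately show "a = b" by (meson inj_onD)
  qed
  moreover have "?f ` V \<subseteq> {1..card V}" using cases_f two by fastforce
  ultimately have "bij_betw ?f V {1..card V}" using fin by (intro bij_betw_atLeastAtMost_if_inj_card) auto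
  moreover have "?f a + ?f b \<le> card V + 1" if ab: "{a, b} \<in> E" for a b
  proof -
    have "a \<noteq> b" "a \<in> V" "b \<in> V" using edges[OF ab] by auto
    consider "a = x" | "b = x" | "a \<noteq> x" "b \<noteq> x" "a = w \<or> b = w" | "a \<in> V'" "b \<in> V'"
      using \<open>a \<in> V\<close> \<open>b \<in> V\<close> unfolding V'_def by blast
    then show ?thesis
    proof cases
      case 1
      then show ?thesis using leaf[of b] ab xw by (auto simp: insert_commute)
    next
      case 2
      then show ?thesis using leaf[of a] ab xw by auto
    next
      case 3
      then show ?thesis using cases_f[OF \<open>a \<in> V\<close>] cases_f[OF \<open>b \<in> V\<close>] \<open>a \<noteq> b\<close> by auto
    next
      case 4
      then have "f' a + f' b \<le> card V' + 1"
        using f' ab unfolding tight_numbering_def V'_def by auto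
      then show ?thesis using 4 inner card_V' two by simp
    qed
  qed
  ultimately show ?thesis unfolding tight_numbering_def by blast
qed

lemma forest_tight_numbering:
  assumes "is_forest G"
  shows "\<exists>f. tight_numbering (fst G) (snd G) f"
  using assms
proof (induction "card (fst G)" arbitrary: G rule: less_induct)
  case less
  have graph: "is_graph G" and acyclic: "\<nexists>xs. is_cycle G xs"
    using less.prems unfolding is_forest_def by auto
  have fin: "finite (fst G)" using graph unfolding is_graph_def by simp
  show ?case
  proof (cases "snd G = {}")
    case True
    obtain f where "bij_betw f (fst G) {1..card (fst G)}"
      using finite_same_card_bij[OF fin, of "{1..card (fst G)}"] by auto
    then show ?thesis using True unfolding tight_numbering_def by blast
  next
    case False
    then obtain e0 where e0: "e0 \<in> snd G" by blast
    then obtain a b where "e0 = {a, b}" using graph unfolding is_graph_def by blast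
    with e0 have e: "{a, b} \<in> snd G" by simp
    have "\<exists>x w. {x, w} \<in> snd G \<and> (\<forall>u. {u, x} \<in> snd G \<longrightarrow> u = w)"
    proof (rule ccontr)
      assume "\<not> ?thesis"
      then have "\<And>x w. {x, w} \<in> snd G \<Longrightarrow> \<exists>u. {u, x} \<in> snd G \<and> u \<noteq> w" by blast
      then show False using cycle_if_no_leaf[OF graph _ e] acyclic by blast
    qed
    then obtain x w where xw: "{x, w} \<in> snd G" and leaf: "\<And>u. {u, x} \<in> snd G \<Longrightarrow> u = w"
      by blast
    have xw': "x \<noteq> w" "x \<in> fst G" "w \<in> fst G" using is_graph_edgeD[OF graph xw] by auto
    define W where "W = fst G - {x, w}"
    have "card (fst (induced_subgraph G W)) < card (fst G)"
      using fin xw' unfolding W_def induced_subgraph_def by (intro psubset_card_mono) auto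
    moreover have "is_forest (induced_subgraph G W)"
      using less.prems unfolding W_def by (intro is_forest_induced_subgraph) auto
    ultimately obtain f' where
      "tight_numbering (fst (induced_subgraph G W)) (snd (induced_subgraph G W)) f'"
      using less.hyps by blast
    then have f': "tight_numbering (fst G - {x, w}) {e \<in> snd G. e \<subseteq> fst G - {x, w}} f'"
      unfolding induced_subgraph_def W_def by simp
    have "\<And>a b. {a, b} \<in> snd G \<Longrightarrow> a \<noteq> b \<and> a \<in> fst G \<and> b \<in> fst G"
      using is_graph_edgeD[OF graph] by blast
    from tight_numbering_extend_leaf[OF fin this xw' leaf f'] show ?thesis by blast
  qed
qed

(* Bot gets 1, ..., |Bot| and Top gets p, p - 1, ..., |Bot| + 1, both in the order of \<sigma>.
   For an edge from x \<in> Top down to y \<in> Bot the counting hypothesis says that the rank of y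
   in Bot is at most the rank of x in Top, which is exactly f x + f y \<le> p + 1. *)
lemma tight_numbering_bottom_top:
  fixes \<sigma> :: "'a \<Rightarrow> nat"
  assumes fin: "finite Bot" "finite Top" and disj: "Bot \<inter> Top = {}"
    and edges: "\<And>x y. {x, y} \<in> E \<Longrightarrow> x \<noteq> y \<and> x \<in> Bot \<union> Top \<and> y \<in> Bot \<union> Top"
    and Top_independent: "\<And>x y. {x, y} \<in> E \<Longrightarrow> x \<in> Top \<Longrightarrow> y \<notin> Top"
    and weight_le: "\<And>x y. {x, y} \<in> E \<Longrightarrow> x \<in> Top \<Longrightarrow> y \<in> Bot \<Longrightarrow> \<sigma> y \<le> \<sigma> x"
    and count: "\<And>i. card {y\<in>Bot. \<sigma> y \<le> i} \<le> card {x\<in>Top. \<sigma> x < i} + 1"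
    and card_le: "card Bot \<le> card Top"
  shows "\<exists>f. tight_numbering (Bot \<union> Top) E f \<and> (\<forall>x\<in>Bot. f x \<le> card Bot)"
proof -
  obtain gB where gB: "bij_betw gB Bot {1..card Bot}"
    "\<forall>a\<in>Bot. \<forall>b\<in>Bot. \<sigma> a < \<sigma> b \<longrightarrow> gB a < gB b"
    using monotone_numbering_exists[OF fin(1)] by blast
  obtain gT where gT: "bij_betw gT Top {1..card Top}"
    "\<forall>a\<in>Top. \<forall>b\<in>Top. \<sigma> a < \<sigma> b \<longrightarrow> gT a < gT b"
    using monotone_numbering_exists[OF fin(2)] by blast
  define p where "p = card (Bot \<union> Top)"
  have p: "p = card Bot + card Top" using fin disj unfolding p_def by (simp add: card_Un_disjoint)
  define f where "f x = (if x \<in> Bot then gB x else p + 1 - gT x)" for x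
  have rB: "1 \<le> gB x \<and> gB x \<le> card Bot" if "x \<in> Bot" for x
    using gB(1) that by (auto simp: bij_betw_def)
  have rT: "1 \<le> gT x \<and> gT x \<le> card Top" if "x \<in> Top" for x
    using gT(1) that by (auto simp: bij_betw_def)
  have fB: "f x = gB x" if "x \<in> Bot" for x using that by (simp add: f_def)
  have fT: "f x = p + 1 - gT x" if "x \<in> Top" for x using that disj by (auto simp: f_def)
  have fT_range: "card Bot < f x \<and> f x \<le> p" if "x \<in> Top" for x
    using fT[OF that] rT[OF that] p by arith
  have "inj_on f (Bot \<union> Top)"
  proof (rule inj_onI)
    fix a b assume ab: "a \<in> Bot \<union> Top" "b \<in> Bot \<union> Top" "f a = f b"
    consider "a \<in> Bot" "b \<in> Bot" | "a \<in> Bot" "b \<in> Top" | "a \<in> Top" "b \<in> Bot"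
      | "a \<in> Top" "b \<in> Top"
      using ab by blast
    then have "(a \<in> Bot \<and> b \<in> Bot \<and> gB a = gB b) \<or> (a \<in> Top \<and> b \<in> Top \<and> gT a = gT b)"
    proof cases
      case 1
      then show ?thesis using ab fB by simp
    next
      case 2
      then show ?thesis using ab fB[of a] rB[of a] fT_range[of b] by simp
    next
      case 3
      then show ?thesis using ab fB[of b] rB[of b] fT_range[of a] by simp
    next
      case 4
      then show ?thesis using ab fT rT p by force
    qed
    then show "a = b" using gB(1) gT(1) unfolding bij_betw_def inj_on_def by blast
  qed
  moreover have "f x \<in> {1..p}" if "x \<in> Bot \<union> Top" for x
    using that fB[of x] rB[of x] fT_range[of x] p by (cases "x \<in> Bot") auto
  ultimately have bij: "bij_betw f (Bot \<union> Top) {1..p}"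
    using fin p_def by (intro bij_betw_atLeastAtMost_if_inj_card) blast+
  have Top_Bot_edge: "f a + f b \<le> p + 1" if ab: "{a, b} \<in> E" "a \<in> Top" "b \<in> Bot" for a b
  proof -
    have "gB b \<le> card {y\<in>Bot. \<sigma> y \<le> \<sigma> b}" by (rule monotone_numbering_le_card[OF gB ab(3) fin(1)])
    also have "\<dots> \<le> card {y\<in>Bot. \<sigma> y \<le> \<sigma> a}"
      using weight_le[OF ab] fin(1) by (intro card_mono) auto
    also have "\<dots> \<le> card {x\<in>Top. \<sigma> x < \<sigma> a} + 1" by (rule count)
    also have "\<dots> \<le> gT a" using card_less_monotone_numbering[OF gT ab(2) fin(2)] by simp
    finally show ?thesis using fB[OF ab(3)] fT[OF ab(2)] rT[OF ab(2)] p by simp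
  qed
  have "f x + f y \<le> p + 1" if e: "{x, y} \<in> E" for x y
  proof -
    consider "x \<in> Bot" "y \<in> Bot" | "x \<in> Bot" "y \<in> Top" | "x \<in> Top" "y \<in> Bot"
      using edges[OF e] Top_independent[OF e] by blast
    then show ?thesis
    proof cases
      case 1
      then have "gB x \<noteq> gB y" using edges[OF e] gB(1) unfolding bij_betw_def inj_on_def by metis
      then show ?thesis using rB[OF 1(1)] rB[OF 1(2)] fB 1 p card_le by auto
    next
      case 2
      then show ?thesis using Top_Bot_edge[of y x] e by (simp add: insert_commute)
    next
      case 3
      then show ?thesis using Top_Bot_edge e by simp
    qed
  qed
  then have "tight_numbering (Bot \<union> Top) E f" using bij unfolding tight_numbering_def p_def by blast
  then show ?thesis using fB rB by auto
qed

lemma tight_numbering_splice: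
  assumes fin: "finite V1" "finite V2" and disj: "V1 \<inter> V2 = {}"
    and f1: "bij_betw f1 V1 {1..card V1}" and f2: "bij_betw f2 V2 {1..card V2}"
    and c: "2 * c \<le> card V1"
    and edges: "\<And>x y. {x, y} \<in> E \<Longrightarrow>
        (x \<in> V1 \<and> y \<in> V1 \<and> f1 x + f1 y \<le> card V1 + 1 \<and> (f1 x \<le> c \<or> f1 y \<le> c)) \<or>
        (x \<in> V2 \<and> y \<in> V2 \<and> f2 x + f2 y \<le> card V2 + 1) \<or>
        (x \<in> V1 \<and> y \<in> V2 \<and> f1 x \<le> c) \<or> (x \<in> V2 \<and> y \<in> V1 \<and> f1 y \<le> c)"
  shows "\<exists>f. tight_numbering (V1 \<union> V2) E f"
proof -
  define p1 where "p1 = card V1"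
  define p2 where "p2 = card V2"
  have p: "card (V1 \<union> V2) = p1 + p2" using fin disj unfolding p1_def p2_def by (simp add: card_Un_disjoint)
  define f where "f x = (if x \<in> V1 then (if f1 x \<le> c then f1 x else f1 x + p2) else f2 x + c)" for x
  have r1: "1 \<le> f1 x \<and> f1 x \<le> p1" if "x \<in> V1" for x using f1 that p1_def by (auto simp: bij_betw_def)
  have r2: "1 \<le> f2 x \<and> f2 x \<le> p2" if "x \<in> V2" for x using f2 that p2_def by (auto simp: bij_betw_def)
  have cases_f: "(x \<in> V1 \<and> f1 x \<le> c \<and> f x = f1 x \<and> 1 \<le> f x \<and> f x \<le> c)
      \<or> (x \<in> V2 \<and> f x = f2 x + c \<and> c < f x \<and> f x \<le> c + p2)
      \<or> (x \<in> V1 \<and> \<not> f1 x \<le> c \<and> f x = f1 x + p2 \<and> c + p2 < f x \<and> f x \<le> p1 + p2)"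
    if "x \<in> V1 \<union> V2" for x
    using that r1[of x] r2[of x] disj unfolding f_def by auto
  have "inj_on f (V1 \<union> V2)"
  proof (rule inj_onI)
    fix a b assume ab: "a \<in> V1 \<union> V2" "b \<in> V1 \<union> V2" "f a = f b"
    have "(a \<in> V1 \<and> b \<in> V1 \<and> f1 a = f1 b) \<or> (a \<in> V2 \<and> b \<in> V2 \<and> f2 a = f2 b)"
      using cases_f[OF ab(1)] cases_f[OF ab(2)] ab(3) disj by auto
    then show "a = b" using f1 f2 unfolding bij_betw_def by (meson inj_onD)
  qed
  moreover have "f ` (V1 \<union> V2) \<subseteq> {1..card (V1 \<union> V2)}"
    using cases_f p c unfolding p1_def by fastforce
  ultimately have "bij_betw f (V1 \<union> V2) {1..card (V1 \<union> V2)}"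
    using fin by (intro bij_betw_atLeastAtMost_if_inj_card) auto
  moreover have "f x + f y \<le> card (V1 \<union> V2) + 1" if e: "{x, y} \<in> E" for x y
  proof -
    have xy: "x \<in> V1 \<union> V2" "y \<in> V1 \<union> V2" using edges[OF e] by auto
    show ?thesis
      using edges[OF e] cases_f[OF xy(1)] cases_f[OF xy(2)] p c disj unfolding p1_def p2_def by auto
  qed
  ultimately show ?thesis unfolding tight_numbering_def by blast
qed

locale dseq_graph =
  fixes H :: "'a graph" and s :: nat and Gs :: "nat \<Rightarrow> 'a graph" and us :: "nat \<Rightarrow> 'a"
  assumes graph: "is_graph H" and dseq: "is_dseq H s Gs us"
    and no_isolated: "isolated H = {}"
begin

abbreviation "Vs i \<equiv> fst (Gs i)"
abbreviation "Es i \<equiv> snd (Gs i)"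

lemma length_ge_2: "2 \<le> s" using dseq unfolding is_dseq_def by simp
lemma first_graph: "Gs 1 = H" using dseq unfolding is_dseq_def by simp
lemma step: "1 \<le> i \<Longrightarrow> i < s \<Longrightarrow> \<not> stop_form (Gs i) \<and> us i \<in> nonisol (Gs i) \<and> Gs (Suc i) = dstep (Gs i) (us i)"
  using dseq unfolding is_dseq_def by simp

lemma finite_H: "finite (fst H)" using graph unfolding is_graph_def by simp
lemmas edge_H = is_graph_edgeD[OF graph]

lemma vertices_edges: "1 \<le> i \<Longrightarrow> i \<le> s \<Longrightarrow> Vs i \<subseteq> fst H \<and> Es i = {e \<in> snd H. e \<subseteq> Vs i}"
proof (induction i rule: nat_induct_at_least)
  case base
  have "snd H = {e \<in> snd H. e \<subseteq> fst H}" using is_graph_edge_subset[OF graph] by blast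
  then show ?case using first_graph by simp
next
  case (Suc i)
  have st: "Gs (Suc i) = dstep (Gs i) (us i)" using step[of i] Suc by simp
  have IH: "Vs i \<subseteq> fst H" "Es i = {e \<in> snd H. e \<subseteq> Vs i}" using Suc by auto
  have W: "Vs (Suc i) \<subseteq> Vs i" using st unfolding dstep_def nonisol_def Let_def by auto
  have "Es (Suc i) = {e \<in> Es i. e \<subseteq> Vs (Suc i)}" using st unfolding dstep_def Let_def by simp
  then show ?case using IH W by auto
qed

lemma vertices_subset: "1 \<le> i \<Longrightarrow> i \<le> s \<Longrightarrow> Vs i \<subseteq> fst H" using vertices_edges by blast
lemma edges_eq: "1 \<le> i \<Longrightarrow> i \<le> s \<Longrightarrow> Es i = {e \<in> snd H. e \<subseteq> Vs i}" using vertices_edges by blast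

lemma vertices_Suc: "1 \<le> i \<Longrightarrow> i < s \<Longrightarrow> Vs (Suc i) = nonisol (Gs i) - closed_nbhd (Gs i) (us i)"
  using step[of i] unfolding dstep_def Let_def by simp

lemma vertices_Suc_subset: "1 \<le> i \<Longrightarrow> i < s \<Longrightarrow> Vs (Suc i) \<subseteq> Vs i"
  using vertices_Suc unfolding nonisol_def by auto

lemma vertices_antimono:
  assumes "1 \<le> j" "j \<le> i" "i \<le> s"
  shows "Vs i \<subseteq> Vs j"
  using assms(2,3)
proof (induction i rule: dec_induct)
  case (step n)
  then show ?case using vertices_Suc_subset[of n] assms(1) by auto
qed simp

lemma edge_iff: "1 \<le> i \<Longrightarrow> i \<le> s \<Longrightarrow> {a,b} \<in> Es i \<longleftrightarrow> {a,b} \<in> snd H \<and> a \<in> Vs i \<and> b \<in> Vs i"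
  using edges_eq by auto

lemma isolated_iff: "v \<in> isolated (Gs i) \<longleftrightarrow> v \<in> Vs i \<and> (\<forall>u. {u,v} \<notin> Es i)"
  unfolding isolated_def by simp
lemma nonisol_iff: "v \<in> nonisol (Gs i) \<longleftrightarrow> v \<in> Vs i \<and> (\<exists>u. {u,v} \<in> Es i)"
  unfolding nonisol_def isolated_def by auto

definition level :: "'a \<Rightarrow> nat" where "level v = Max {i \<in> {1..s}. v \<in> Vs i}"

lemma level_props:
  assumes v: "v \<in> fst H"
  shows "1 \<le> level v \<and> level v \<le> s \<and> v \<in> Vs (level v) \<and> (level v < s \<longrightarrow> v \<notin> Vs (Suc (level v)))"
proof -
  define S where "S = {i \<in> {1..s}. v \<in> Vs i}"
  have fS: "finite S" unfolding S_def by simp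
  have "1 \<in> S" unfolding S_def using first_graph v length_ge_2 by simp
  then have ne: "S \<noteq> {}" by blast
  have inS: "level v \<in> S" unfolding level_def S_def[symmetric] using Max_in[OF fS ne] .
  have "level v < s \<longrightarrow> v \<notin> Vs (Suc (level v))"
  proof (intro impI notI)
    assume a: "level v < s" "v \<in> Vs (Suc (level v))"
    then have "Suc (level v) \<in> S" unfolding S_def by simp
    then have "Suc (level v) \<le> level v" unfolding level_def S_def[symmetric] using Max_ge[OF fS] by blast
    then show False by simp
  qed
  then show ?thesis using inS unfolding S_def by simp
qed

lemma level_eqI:
  assumes i: "1 \<le> i" "i \<le> s" and v: "v \<in> Vs i" and nv: "i < s \<Longrightarrow> v \<notin> Vs (Suc i)"
  shows "level v = i"
proof -
  have vH: "v \<in> fst H" using vertices_subset[OF i] v by blast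
  note lp = level_props[OF vH]
  show ?thesis
  proof (rule ccontr)
    assume ne: "level v \<noteq> i"
    show False
    proof (cases "level v < i")
      case True
      then have "Vs i \<subseteq> Vs (Suc (level v))" using vertices_antimono[of "Suc (level v)" i] i by simp
      then show False using v lp True i by auto
    next
      case False
      then have "i < level v" using ne by simp
      then have "Vs (level v) \<subseteq> Vs (Suc i)" using vertices_antimono[of "Suc i" "level v"] lp by simp
      then show False using nv lp \<open>i < level v\<close> by auto
    qed
  qed
qed

definition dnbhd :: "nat \<Rightarrow> 'a set" where "dnbhd i = {v. {v, us i} \<in> Es i}"

lemma closed_nbhd_us: "closed_nbhd (Gs i) (us i) = insert (us i) (dnbhd i)"
  unfolding closed_nbhd_def dnbhd_def by (auto simp: insert_commute)

lemma removed_vertex_cases: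
  assumes "1 \<le> i" "i < s" "v \<in> Vs i" "v \<notin> Vs (Suc i)"
  shows "v \<in> isolated (Gs i) \<or> v = us i \<or> v \<in> dnbhd i"
proof -
  have "v \<notin> nonisol (Gs i) - closed_nbhd (Gs i) (us i)" using vertices_Suc assms by simp
  then show ?thesis using assms(3) closed_nbhd_us unfolding nonisol_def by auto
qed

lemma us_props:
  assumes "1 \<le> i" "i < s"
  shows "us i \<in> Vs i" "us i \<notin> Vs (Suc i)" "us i \<notin> isolated (Gs i)" "us i \<notin> dnbhd i" "level (us i) = i"
proof -
  have n: "us i \<in> nonisol (Gs i)" using step assms by simp
  then show "us i \<in> Vs i" unfolding nonisol_def by simp
  show "us i \<notin> Vs (Suc i)" using vertices_Suc assms closed_nbhd_us by simp
  show "us i \<notin> isolated (Gs i)" using n unfolding nonisol_def by simp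
  show "us i \<notin> dnbhd i"
  proof
    assume "us i \<in> dnbhd i"
    then have "{us i, us i} \<in> snd H" unfolding dnbhd_def using edges_eq assms by auto
    then show False using edge_H by blast
  qed
  show "level (us i) = i" using level_eqI assms \<open>us i \<in> Vs i\<close> \<open>us i \<notin> Vs (Suc i)\<close> by simp
qed

lemma dnbhd_props:
  assumes "1 \<le> i" "i < s" "v \<in> dnbhd i"
  shows "v \<in> Vs i" "v \<notin> Vs (Suc i)" "v \<notin> isolated (Gs i)" "v \<noteq> us i" "level v = i" "v \<in> fst H"
proof -
  have e: "{v, us i} \<in> Es i" using assms unfolding dnbhd_def by simp
  then show vV: "v \<in> Vs i" using edge_iff assms by auto
  show "v \<notin> Vs (Suc i)" using vertices_Suc assms closed_nbhd_us by simp
  show "v \<notin> isolated (Gs i)" using e isolated_iff by (auto simp: insert_commute)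
  show "v \<noteq> us i" using us_props assms by auto
  show "level v = i" using level_eqI assms vV \<open>v \<notin> Vs (Suc i)\<close> by simp
  show "v \<in> fst H" using vV vertices_subset[of i] assms by auto
qed

lemma isolated_level:
  assumes "1 \<le> i" "i \<le> s" "v \<in> isolated (Gs i)"
  shows "level v = i" "v \<in> fst H" "v \<in> Vs i"
proof -
  show vV: "v \<in> Vs i" using assms isolated_iff by simp
  have "i < s \<Longrightarrow> v \<notin> Vs (Suc i)" using vertices_Suc assms unfolding nonisol_def by auto
  then show "level v = i" using level_eqI assms vV by simp
  show "v \<in> fst H" using vV vertices_subset[of i] assms by auto
qed

(* The tops of slot i are u_i and the isolated vertices of G_(i+1); its bottoms are the
   neighbours of u_i in G_i. In the last slot s an arbitrary non-isolated vertex of the final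
   clique plays the role of u_s. Hence slot i has m_(i+1) + 1 tops and d_i bottoms, which is
   how z_i enters. *)
definition centre :: "nat \<Rightarrow> 'a" where "centre i = (if i < s then us i else (SOME x. x \<in> nonisol (Gs s)))"
definition is_top :: "'a \<Rightarrow> bool" where "is_top v \<longleftrightarrow> v \<in> isolated (Gs (level v)) \<or> v = centre (level v)"
definition slot :: "'a \<Rightarrow> nat" where "slot v = (if v \<in> isolated (Gs (level v)) then level v - 1 else level v)"
definition tops where "tops = {v \<in> fst H. is_top v}"
definition bottoms where "bottoms = {v \<in> fst H. \<not> is_top v}"

lemma bottoms_level:
  assumes "1 \<le> i" "i < s"
  shows "{v \<in> bottoms. level v = i} = dnbhd i"
proof
  show "{v \<in> bottoms. level v = i} \<subseteq> dnbhd i"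
  proof
    fix v assume v: "v \<in> {v \<in> bottoms. level v = i}"
    then have vH: "v \<in> fst H" and l: "level v = i" and nt: "\<not> is_top v" unfolding bottoms_def by auto
    have "v \<in> Vs i" "v \<notin> Vs (Suc i)" using level_props[OF vH] l assms by auto
    then have "v \<in> isolated (Gs i) \<or> v = us i \<or> v \<in> dnbhd i" using removed_vertex_cases assms by simp
    then show "v \<in> dnbhd i" using nt l assms unfolding is_top_def centre_def by auto
  qed
  show "dnbhd i \<subseteq> {v \<in> bottoms. level v = i}"
  proof
    fix v assume v: "v \<in> dnbhd i"
    note np = dnbhd_props[OF assms v]
    have "\<not> is_top v" using np assms unfolding is_top_def centre_def by auto
    then show "v \<in> {v \<in> bottoms. level v = i}" using np unfolding bottoms_def by simp
  qed
qed

lemma bottoms_level_last: "{v \<in> bottoms. level v = s} = nonisol (Gs s) - {centre s}"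
proof
  show "{v \<in> bottoms. level v = s} \<subseteq> nonisol (Gs s) - {centre s}"
  proof
    fix v assume v: "v \<in> {v \<in> bottoms. level v = s}"
    then have vH: "v \<in> fst H" and l: "level v = s" and nt: "\<not> is_top v" unfolding bottoms_def by auto
    have "v \<in> Vs s" using level_props[OF vH] l by auto
    then show "v \<in> nonisol (Gs s) - {centre s}" using nt l unfolding is_top_def nonisol_def by auto
  qed
  show "nonisol (Gs s) - {centre s} \<subseteq> {v \<in> bottoms. level v = s}"
  proof
    fix v assume v: "v \<in> nonisol (Gs s) - {centre s}"
    then have vV: "v \<in> Vs s" unfolding nonisol_def by simp
    have l: "level v = s" using level_eqI[of s v] vV length_ge_2 by simp
    have vH: "v \<in> fst H" using vV vertices_subset[of s] length_ge_2 by auto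
    have "\<not> is_top v" using v l unfolding is_top_def nonisol_def by auto
    then show "v \<in> {v \<in> bottoms. level v = s}" using vH l unfolding bottoms_def by simp
  qed
qed

lemma tops_slot:
  assumes "1 \<le> t" "t < s"
  shows "{x \<in> tops. slot x = t} = insert (us t) (isolated (Gs (Suc t)))"
proof
  show "{x \<in> tops. slot x = t} \<subseteq> insert (us t) (isolated (Gs (Suc t)))"
  proof
    fix x assume x: "x \<in> {x \<in> tops. slot x = t}"
    then have xH: "x \<in> fst H" and tp: "is_top x" and sg: "slot x = t" unfolding tops_def by auto
    note lp = level_props[OF xH]
    show "x \<in> insert (us t) (isolated (Gs (Suc t)))"
    proof (cases "x \<in> isolated (Gs (level x))")
      case True
      then have "level x = Suc t" using sg assms lp unfolding slot_def by auto
      then show ?thesis using True by simp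
    next
      case False
      then have "x = centre (level x)" "level x = t" using tp sg unfolding is_top_def slot_def by auto
      then show ?thesis using assms unfolding centre_def by simp
    qed
  qed
  show "insert (us t) (isolated (Gs (Suc t))) \<subseteq> {x \<in> tops. slot x = t}"
  proof
    fix x assume x: "x \<in> insert (us t) (isolated (Gs (Suc t)))"
    show "x \<in> {x \<in> tops. slot x = t}"
    proof (cases "x = us t")
      case True
      note up = us_props[OF assms]
      have xH: "x \<in> fst H" using True up vertices_subset[of t] assms by auto
      have "is_top x" "slot x = t" using True up assms unfolding is_top_def slot_def centre_def by auto
      then show ?thesis using xH unfolding tops_def by simp
    next
      case False
      then have xi: "x \<in> isolated (Gs (Suc t))" using x by simp
      note il = isolated_level[OF _ _ xi]
      have "level x = Suc t" "x \<in> fst H" using il assms by auto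
      then have "is_top x" "slot x = t" using xi unfolding is_top_def slot_def by auto
      then show ?thesis using \<open>x \<in> fst H\<close> unfolding tops_def by simp
    qed
  qed
qed

lemma tops_slot_0: "{x \<in> tops. slot x = 0} = {}"
proof -
  have "False" if x: "x \<in> tops" "slot x = 0" for x
  proof -
    have xH: "x \<in> fst H" using x unfolding tops_def by simp
    note lp = level_props[OF xH]
    show False
    proof (cases "x \<in> isolated (Gs (level x))")
      case True
      then have "level x = 1" using x lp unfolding slot_def by auto
      then have "x \<in> isolated H" using True first_graph by simp
      then show False using no_isolated by simp
    next
      case False then show False using x lp unfolding slot_def by auto
    qed
  qed
  then show ?thesis by blast
qed

lemma slot_bottom: "v \<in> bottoms \<Longrightarrow> slot v = level v"
  unfolding bottoms_def is_top_def slot_def by auto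

lemma finite_tops: "finite tops" and finite_bottoms: "finite bottoms"
  unfolding tops_def bottoms_def using finite_H by auto

lemma tops_Un_bottoms: "tops \<union> bottoms = fst H" and tops_Int_bottoms: "tops \<inter> bottoms = {}"
  unfolding tops_def bottoms_def by auto

lemma slot_le_length: "v \<in> fst H \<Longrightarrow> slot v \<le> s"
  using level_props[of v] unfolding slot_def by auto

lemma card_bottoms_level:
  assumes "1 \<le> i" "i \<le> s"
  shows "card {v \<in> bottoms. level v = i} = dval s Gs us i"
proof (cases "i < s")
  case True
  then show ?thesis using bottoms_level[OF assms(1) True] unfolding dval_def deg_def dnbhd_def by simp
next
  case False
  then have i: "i = s" using assms by simp
  have fK: "finite (nonisol (Gs s))"
  proof (rule finite_subset[OF _ finite_H])
    show "nonisol (Gs s) \<subseteq> fst H" using vertices_subset[of s] length_ge_2 unfolding nonisol_def by auto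
  qed
  have "card (nonisol (Gs s) - {centre s}) = stop_d (Gs s)"
  proof (cases "Es s = {}")
    case True
    then have "nonisol (Gs s) = {}" using nonisol_iff by auto
    then show ?thesis using True unfolding stop_d_def by simp
  next
    case False
    then obtain e where e: "e \<in> Es s" by blast
    then have "e \<in> snd H" using edges_eq[of s] length_ge_2 by auto
    then obtain a b where ab: "e = {a,b}" using graph unfolding is_graph_def by blast
    then have "b \<in> nonisol (Gs s)" using e edge_iff[of s a b] length_ge_2 nonisol_iff by auto
    then have "centre s \<in> nonisol (Gs s)" unfolding centre_def by (simp add: someI_ex[of "\<lambda>x. x \<in> nonisol (Gs s)"] exI)
    then show ?thesis using False fK unfolding stop_d_def by simp
  qed
  then show ?thesis using i bottoms_level_last unfolding dval_def by simp
qed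

lemma card_tops_slot:
  assumes "1 \<le> t" "t < s"
  shows "card {x \<in> tops. slot x = t} = Suc (mval Gs (Suc t))"
proof -
  have sub: "isolated (Gs (Suc t)) \<subseteq> Vs (Suc t)" unfolding isolated_def by auto
  have fI: "finite (isolated (Gs (Suc t)))"
    using finite_subset[OF sub] finite_subset[OF vertices_subset[of "Suc t"] finite_H] assms by simp
  have "us t \<notin> isolated (Gs (Suc t))" using us_props[OF assms] sub by blast
  then show ?thesis using tops_slot[OF assms] fI unfolding mval_def by simp
qed

lemma tops_bottoms_balance:
  assumes "1 \<le> t" "t \<le> s"
  shows "int (card {x \<in> tops. slot x < t}) - int (card {y \<in> bottoms. slot y \<le> t})
         = zval s Gs us t - int (dval s Gs us 1)"
  using assms
proof (induction t rule: nat_induct_at_least)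
  case base
  have a: "{x \<in> tops. slot x < 1} = {}" using tops_slot_0 by auto
  have b: "{y \<in> bottoms. slot y \<le> 1} = {y \<in> bottoms. level y = 1}"
  proof -
    have "y \<in> bottoms \<Longrightarrow> 1 \<le> level y" for y using level_props[of y] unfolding bottoms_def by auto
    then show ?thesis using slot_bottom by force
  qed
  have z: "zval s Gs us 1 = 0" unfolding zval_def by simp
  have c: "card {y \<in> bottoms. slot y \<le> 1} = dval s Gs us 1" unfolding b using card_bottoms_level[of 1] length_ge_2 by simp
  show ?case unfolding a using c z by simp
next
  case (Suc t)
  have ts: "t < s" using Suc by simp
  have IH: "int (card {x \<in> tops. slot x < t}) - int (card {y \<in> bottoms. slot y \<le> t})
         = zval s Gs us t - int (dval s Gs us 1)" using Suc ts by simp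
  have A: "{x \<in> tops. slot x < Suc t} = {x \<in> tops. slot x < t} \<union> {x \<in> tops. slot x = t}" by auto
  have cA: "card {x \<in> tops. slot x < Suc t} = card {x \<in> tops. slot x < t} + card {x \<in> tops. slot x = t}"
    unfolding A by (rule card_Un_disjoint) (use finite_tops in auto)
  have B: "{y \<in> bottoms. slot y \<le> Suc t} = {y \<in> bottoms. slot y \<le> t} \<union> {y \<in> bottoms. level y = Suc t}"
    using slot_bottom by auto
  have cB: "card {y \<in> bottoms. slot y \<le> Suc t} = card {y \<in> bottoms. slot y \<le> t} + card {y \<in> bottoms. level y = Suc t}"
    unfolding B by (rule card_Un_disjoint) (use finite_bottoms slot_bottom in auto)
  have z: "zval s Gs us (Suc t) = zval s Gs us t + yval s Gs us (Suc t)"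
    unfolding zval_def using Suc.hyps by simp
  have y: "yval s Gs us (Suc t) = int (mval Gs (Suc t)) + 1 - int (dval s Gs us (Suc t))"
    unfolding yval_def by simp
  show ?case using IH cA cB z y card_tops_slot[OF Suc.hyps ts] card_bottoms_level[of "Suc t"] Suc.prems by simp
qed

lemma bottoms_excess:
  assumes Zmin: "Zmin s Gs us \<le> 0"
  shows "int (card {y \<in> bottoms. slot y \<le> t}) - int (card {x \<in> tops. slot x < t})
         \<le> int (dval s Gs us 1) - Zmin s Gs us"
proof (cases "t = 0")
  case True
  have "1 \<le> slot y" if "y \<in> bottoms" for y
    using that slot_bottom level_props unfolding bottoms_def by auto
  then have "{y \<in> bottoms. slot y \<le> t} = {}" using True by fastforce
  then have "int (card {y \<in> bottoms. slot y \<le> t}) = 0" by (simp only: card.empty of_nat_0)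
  moreover have "0 \<le> int (card {x \<in> tops. slot x < t})" "0 \<le> int (dval s Gs us 1)" by simp_all
  ultimately show ?thesis using Zmin by linarith
next
  case False
  define t' where "t' = min t s"
  have t': "1 \<le> t'" "t' \<le> s" using False length_ge_2 unfolding t'_def by auto
  have "slot y \<le> s" if "y \<in> bottoms" for y
    using that slot_le_length unfolding bottoms_def by auto
  then have "{y \<in> bottoms. slot y \<le> t} = {y \<in> bottoms. slot y \<le> t'}" unfolding t'_def by auto
  then have "int (card {y \<in> bottoms. slot y \<le> t}) = int (card {y \<in> bottoms. slot y \<le> t'})"
    by simp
  moreover have "int (card {x \<in> tops. slot x < t'}) \<le> int (card {x \<in> tops. slot x < t})"
    using finite_tops unfolding t'_def by (auto intro!: card_mono)
  moreover have "Zmin s Gs us \<le> zval s Gs us t'"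
  proof (cases "t' = 1")
    case True
    then show ?thesis using Zmin unfolding zval_def by simp
  next
    case False
    then show ?thesis using t' unfolding Zmin_def by (intro Min_le) auto
  qed
  ultimately show ?thesis using tops_bottoms_balance[OF t'] by linarith
qed

lemma edge_leaving_level:
  assumes i: "1 \<le> i" "i \<le> s" and x: "x \<in> Vs i" and e: "{x,y} \<in> snd H" and y: "y \<notin> Vs i"
  shows "y \<in> bottoms \<and> level y < i"
proof -
  have yH: "y \<in> fst H" using edge_H e by simp
  define j where "j = level y"
  note lp = level_props[OF yH, folded j_def]
  have ji: "j < i"
  proof (rule ccontr)
    assume "\<not> j < i"
    then have "Vs j \<subseteq> Vs i" using vertices_antimono[of i j] i lp by simp
    then show False using lp y by auto
  qed
  have js: "j < s" using ji i by simp
  have "Vs i \<subseteq> Vs j" using vertices_antimono[of j i] lp i ji by simp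
  then have xj: "x \<in> Vs j" using x by blast
  have ej: "{x,y} \<in> Es j" using edge_iff[of j x y] lp js e xj by simp
  have yn: "y \<notin> Vs (Suc j)" using lp js by simp
  have "y \<in> isolated (Gs j) \<or> y = us j \<or> y \<in> dnbhd j" using removed_vertex_cases[of j y] lp js yn by simp
  moreover have "y \<notin> isolated (Gs j)" using ej isolated_iff by blast
  moreover have "y \<noteq> us j"
  proof
    assume "y = us j"
    then have "x \<in> dnbhd j" using ej unfolding dnbhd_def by simp
    then have "x \<notin> Vs (Suc j)" using dnbhd_props lp js by blast
    moreover have "Vs i \<subseteq> Vs (Suc j)" using vertices_antimono[of "Suc j" i] ji i by simp
    ultimately show False using x by blast
  qed
  ultimately have "y \<in> dnbhd j" by blast
  then have "y \<in> bottoms" using bottoms_level[of j] lp js by blast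
  then show ?thesis using ji j_def by simp
qed

lemma top_edge_bottom:
  assumes x: "x \<in> tops" and e: "{x,y} \<in> snd H"
  shows "y \<in> bottoms \<and> slot y \<le> slot x"
proof -
  have xH: "x \<in> fst H" using x unfolding tops_def by simp
  define i where "i = level x"
  note lp = level_props[OF xH, folded i_def]
  show ?thesis
  proof (cases "x \<in> isolated (Gs i)")
    case True
    have "y \<notin> Vs i"
    proof
      assume "y \<in> Vs i"
      then have "{y,x} \<in> Es i" using edge_iff[of i y x] lp e by (simp add: insert_commute)
      then show False using True isolated_iff by blast
    qed
    then have "y \<in> bottoms \<and> level y < i" using edge_leaving_level[of i x y] lp e by simp
    then show ?thesis using slot_bottom True i_def unfolding slot_def by auto
  next
    case False
    then have xu: "x = centre i" and sx: "slot x = i" using x unfolding tops_def is_top_def slot_def i_def by auto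
    show ?thesis
    proof (cases "y \<in> Vs i")
      case False
      then have "y \<in> bottoms \<and> level y < i" using edge_leaving_level[of i x y] lp e by simp
      then show ?thesis using slot_bottom sx by auto
    next
      case True
      have exy: "{x,y} \<in> Es i" using edge_iff[of i x y] lp e True by simp
      show ?thesis
      proof (cases "i < s")
        case True
        then have "x = us i" using xu unfolding centre_def by simp
        then have "y \<in> dnbhd i" using exy unfolding dnbhd_def by (simp add: insert_commute)
        then have "y \<in> {v \<in> bottoms. level v = i}" using bottoms_level[of i] lp True by blast
        then show ?thesis using slot_bottom sx by auto
      next
        case False
        then have iS: "i = s" using lp by simp
        have "y \<in> Vs s \<and> (\<exists>u. {u,y} \<in> Es s)" using exy iS True by blast
        then have "y \<in> nonisol (Gs s)" using nonisol_iff by simp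
        moreover have "y \<noteq> centre s" using xu iS edge_H e by auto
        ultimately have "y \<in> {v \<in> bottoms. level v = s}" using bottoms_level_last by blast
        then show ?thesis using slot_bottom sx iS by auto
      qed
    qed
  qed
qed
end

definition support :: "'a graph \<Rightarrow> 'a \<Rightarrow> 'a" where
  "support T v = (SOME w. {w, v} \<in> snd T)"

lemma pendant_P_support:
  assumes "v \<in> pendant_P T"
  shows "{support T v, v} \<in> snd T" and "\<And>u. {u, v} \<in> snd T \<Longrightarrow> u = support T v"
    and "2 \<le> deg T (support T v)"
proof -
  have deg1: "card {u. {u, v} \<in> snd T} = 1" and deg2: "\<exists>u. {u, v} \<in> snd T \<and> 2 \<le> deg T u"
    using assms unfolding pendant_P_def deg_def by auto
  obtain w where "{u. {u, v} \<in> snd T} = {w}" using deg1 by (rule card_1_singletonE)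
  then have nbr: "{u, v} \<in> snd T \<longleftrightarrow> u = w" for u by blast
  then have "support T v = w" unfolding support_def by simp
  then show "{support T v, v} \<in> snd T" "\<And>u. {u, v} \<in> snd T \<Longrightarrow> u = support T v"
    and "2 \<le> deg T (support T v)" using nbr deg2 by auto
qed

lemma support_mem_nbhd_set:
  assumes "is_graph T" "v \<in> pendant_P T"
  shows "support T v \<in> nbhd_set T (pendant_P T)"
proof -
  have e: "{support T v, v} \<in> snd T" using assms(2) by (rule pendant_P_support(1))
  then have "support T v \<in> fst T" using is_graph_edgeD[OF assms(1) e] by simp
  then show ?thesis using e assms(2) unfolding nbhd_set_def by blast
qed

lemma nbhd_set_pendant_P_eq_support:
  assumes "w \<in> nbhd_set T (pendant_P T)"
  obtains v where "v \<in> pendant_P T" "support T v = w"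
proof -
  obtain v where v: "v \<in> pendant_P T" "{w, v} \<in> snd T"
    using assms unfolding nbhd_set_def by blast
  then have "w = support T v" by (intro pendant_P_support(2))
  then show ?thesis using that v(1) by simp
qed

lemma pendant_P_Int_nbhd_set: "pendant_P T \<inter> nbhd_set T (pendant_P T) = {}"
proof -
  have False if P: "v \<in> pendant_P T" and NP: "v \<in> nbhd_set T (pendant_P T)" for v
  proof -
    obtain q where "q \<in> pendant_P T" "support T q = v"
      using NP by (rule nbhd_set_pendant_P_eq_support)
    then have "2 \<le> deg T v" using pendant_P_support(3)[of q T] by simp
    then show False using P unfolding pendant_P_def by simp
  qed
  then show ?thesis by blast
qed

locale forest_extension = dseq_graph H s Gs us
  for H :: "'a graph" and s :: nat and Gs :: "nat \<Rightarrow> 'a graph" and us :: "nat \<Rightarrow> 'a" +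
  fixes T :: "'a graph"
  assumes forest: "is_forest T" and disjoint: "fst H \<inter> fst T = {}"
    and Zmin_nonpos: "Zmin s Gs us \<le> 0"
    and pendant_excess: "int (dval s Gs us 1) - Zmin s Gs us
      \<le> int (card (pendant_P T)) - int (card (nbhd_set T (pendant_P T)))"
begin

abbreviation "P \<equiv> pendant_P T"
abbreviation "NP \<equiv> nbhd_set T P"
abbreviation "G \<equiv> disj_union H T"

lemma graph_T: "is_graph T" using forest unfolding is_forest_def by simp

lemma finite_T: "finite (fst T)" using graph_T unfolding is_graph_def by simp

lemma P_subset: "P \<subseteq> fst T" and NP_subset: "NP \<subseteq> fst T"
  unfolding pendant_P_def nbhd_set_def by auto

lemma finite_P: "finite P" and finite_NP: "finite NP"
  using P_subset NP_subset finite_T by (auto intro: finite_subset)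

lemma graph_G: "is_graph G" using graph graph_T by (rule is_graph_disj_union)

lemma edge_G_cases: "{x, y} \<in> snd G \<Longrightarrow> {x, y} \<in> snd H \<or> {x, y} \<in> snd T"
  unfolding disj_union_def by simp

definition enum :: "'a \<Rightarrow> nat" where
  "enum = (SOME e. bij_betw e NP {0..<card NP})"

lemma enum_bij: "bij_betw enum NP {0..<card NP}"
  unfolding enum_def using ex_bij_betw_finite_nat[OF finite_NP] by (rule someI_ex)

definition weight :: "'a \<Rightarrow> nat" where
  "weight v = (if v \<in> NP then enum v else if v \<in> P then enum (support T v) else card NP + slot v)"

lemma weight_NP: "v \<in> NP \<Longrightarrow> weight v = enum v"
  unfolding weight_def by simp

lemma weight_P: "v \<in> P \<Longrightarrow> weight v = enum (support T v)"
  using pendant_P_Int_nbhd_set[of T] unfolding weight_def by auto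

lemma weight_H: "v \<in> fst H \<Longrightarrow> weight v = card NP + slot v"
  using P_subset NP_subset disjoint unfolding weight_def by auto

definition Bot :: "'a set" where "Bot = NP \<union> bottoms"
definition Top :: "'a set" where "Top = P \<union> tops"

lemma Top_cases: "x \<in> Top \<Longrightarrow> (x \<in> P \<and> x \<in> fst T) \<or> (x \<in> tops \<and> x \<in> fst H)"
  and Bot_cases: "x \<in> Bot \<Longrightarrow> (x \<in> NP \<and> x \<in> fst T) \<or> (x \<in> bottoms \<and> x \<in> fst H)"
  using P_subset NP_subset tops_Un_bottoms unfolding Top_def Bot_def by auto

lemma Bot_Int_Top: "Bot \<inter> Top = {}"
  using Top_cases Bot_cases pendant_P_Int_nbhd_set[of T] tops_Int_bottoms disjoint by blast

lemma Bot_Un_Top: "Bot \<union> Top = fst H \<union> P \<union> NP"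
  using tops_Un_bottoms unfolding Bot_def Top_def by auto

lemma finite_Bot: "finite Bot" and finite_Top: "finite Top"
  unfolding Bot_def Top_def using finite_NP finite_P finite_tops finite_bottoms by auto

lemma card_Bot: "card Bot = card NP + card bottoms"
  unfolding Bot_def using finite_NP finite_bottoms NP_subset tops_Un_bottoms disjoint
  by (intro card_Un_disjoint) auto

lemma card_Top: "card Top = card P + card tops"
  unfolding Top_def using finite_P finite_tops P_subset tops_Un_bottoms disjoint
  by (intro card_Un_disjoint) auto

lemma T_edge_from_P: "{x, y} \<in> snd T \<Longrightarrow> x \<in> P \<Longrightarrow> y = support T x \<and> y \<in> NP"
  using pendant_P_support(2)[of x T y] support_mem_nbhd_set[OF graph_T, of x]
  by (simp add: insert_commute)

lemma Top_independent:
  assumes e: "{x, y} \<in> snd G" and x: "x \<in> Top"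
  shows "y \<notin> Top"
  using edge_G_cases[OF e]
proof
  assume h: "{x, y} \<in> snd H"
  then have "x \<in> tops" using x Top_cases edge_H[OF h] disjoint by blast
  then have "y \<in> bottoms" using top_edge_bottom h by blast
  then show ?thesis using Top_cases tops_Int_bottoms edge_H[OF h] disjoint by blast
next
  assume h: "{x, y} \<in> snd T"
  then have "x \<in> P" using x Top_cases is_graph_edgeD[OF graph_T h] disjoint by blast
  then have "y \<in> NP" using T_edge_from_P h by blast
  then show ?thesis using Top_cases pendant_P_Int_nbhd_set[of T] NP_subset disjoint by blast
qed

lemma weight_le_of_Top_edge:
  assumes e: "{x, y} \<in> snd G" and x: "x \<in> Top"
  shows "weight y \<le> weight x"
  using edge_G_cases[OF e]
proof
  assume h: "{x, y} \<in> snd H"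
  then have xy: "x \<in> fst H" "y \<in> fst H" using edge_H[OF h] by auto
  then have "x \<in> tops" using x Top_cases disjoint by blast
  then show ?thesis using top_edge_bottom[OF _ h] weight_H xy by simp
next
  assume h: "{x, y} \<in> snd T"
  then have "x \<in> P" using x Top_cases is_graph_edgeD[OF graph_T h] disjoint by blast
  moreover have "y = support T x" "y \<in> NP" using T_edge_from_P[OF h] \<open>x \<in> P\<close> by auto
  ultimately show ?thesis using weight_P[of x] weight_NP[of y] by simp
qed

(* Each weight j < i is carried by a support, hence also by a pendant vertex in Top. *)
lemma card_Bot_weight_le_small:
  assumes i: "i < card NP"
  shows "card {y\<in>Bot. weight y \<le> i} \<le> card {x\<in>Top. weight x < i} + 1"
proof -
  have "card {y\<in>Bot. weight y \<le> i} \<le> card {y\<in>NP. enum y \<in> {..i}}"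
    using Bot_cases weight_NP weight_H i finite_NP by (intro card_mono) fastforce+
  also have "\<dots> = card ({..i} \<inter> {0..<card NP})" by (rule card_preimage_bij_betw[OF enum_bij])
  also have "{..i} \<inter> {0..<card NP} = {0..i}" using i by auto
  finally have low: "card {y\<in>Bot. weight y \<le> i} \<le> Suc i" by simp
  define A where "A = {x \<in> P. enum (support T x) < i}"
  have "{0..<i} \<subseteq> (\<lambda>x. enum (support T x)) ` A"
  proof
    fix j assume j: "j \<in> {0..<i}"
    then have "j \<in> enum ` NP" using enum_bij i unfolding bij_betw_def by auto
    then obtain w where w: "w \<in> NP" "enum w = j" by blast
    obtain x where x: "x \<in> P" "support T x = w" using w(1) by (rule nbhd_set_pendant_P_eq_support)
    then have "x \<in> A" using w j unfolding A_def by simp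
    moreover have "j = enum (support T x)" using x(2) w(2) by simp
    ultimately show "j \<in> (\<lambda>x. enum (support T x)) ` A" by (rule rev_image_eqI)
  qed
  then have "card {0..<i} \<le> card ((\<lambda>x. enum (support T x)) ` A)"
    using finite_P unfolding A_def by (intro card_mono) auto
  then have "i \<le> card ((\<lambda>x. enum (support T x)) ` A)" by simp
  also have "\<dots> \<le> card A" using finite_P unfolding A_def by (intro card_image_le) simp
  also have "card A \<le> card {x\<in>Top. weight x < i}"
    using finite_Top weight_P unfolding A_def Top_def by (intro card_mono) auto
  finally show ?thesis using low by simp
qed

lemma card_Bot_weight_le_large:
  assumes i: "card NP \<le> i"
  shows "card {y\<in>Bot. weight y \<le> i} \<le> card {x\<in>Top. weight x < i} + 1"
proof -
  define t where "t = i - card NP"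
  have "card {y\<in>Bot. weight y \<le> i} \<le> card (NP \<union> {y \<in> bottoms. slot y \<le> t})"
    using Bot_cases weight_H finite_NP finite_bottoms unfolding t_def by (intro card_mono) fastforce+
  also have "\<dots> \<le> card NP + card {y \<in> bottoms. slot y \<le> t}" by (rule card_Un_le)
  finally have Bot_le: "card {y\<in>Bot. weight y \<le> i} \<le> card NP + card {y \<in> bottoms. slot y \<le> t}" .
  have "card P + card {x \<in> tops. slot x < t} = card (P \<union> {x \<in> tops. slot x < t})"
    using finite_P finite_tops P_subset tops_Un_bottoms disjoint by (intro card_Un_disjoint[symmetric]) auto
  also have "\<dots> \<le> card {x\<in>Top. weight x < i}"
  proof (rule card_mono)
    show "finite {x\<in>Top. weight x < i}" using finite_Top by simp
    have "weight x < i" if "x \<in> P" for x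
      using weight_P[OF that] bij_betw_apply[OF enum_bij support_mem_nbhd_set[OF graph_T that]] i
      by simp
    moreover have "weight x < i" if "x \<in> tops" "slot x < t" for x
    proof -
      have "x \<in> fst H" using that(1) tops_Un_bottoms by blast
      then show ?thesis using weight_H[of x] that(2) i unfolding t_def by arith
    qed
    ultimately show "P \<union> {x \<in> tops. slot x < t} \<subseteq> {x\<in>Top. weight x < i}"
      unfolding Top_def by blast
  qed
  finally show ?thesis
    using Bot_le bottoms_excess[OF Zmin_nonpos, of t] pendant_excess by linarith
qed

lemma card_Bot_le_card_Top: "card Bot \<le> card Top"
proof -
  have "{y \<in> bottoms. slot y \<le> Suc s} = bottoms" "{x \<in> tops. slot x < Suc s} = tops"
    using slot_le_length tops_Un_bottoms by fastforce+
  then show ?thesis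
    using bottoms_excess[OF Zmin_nonpos, of "Suc s"] pendant_excess card_Bot card_Top by simp
qed

lemma tight_numbering_Bot_Top:
  "\<exists>f. tight_numbering (Bot \<union> Top) (snd (induced_subgraph G (Bot \<union> Top))) f
     \<and> (\<forall>x\<in>Bot. f x \<le> card Bot)"
proof (rule tight_numbering_bottom_top[OF finite_Bot finite_Top Bot_Int_Top])
  fix x y assume e: "{x, y} \<in> snd (induced_subgraph G (Bot \<union> Top))"
  then have eG: "{x, y} \<in> snd G" and sub: "{x, y} \<subseteq> Bot \<union> Top"
    unfolding induced_subgraph_def by auto
  show "x \<noteq> y \<and> x \<in> Bot \<union> Top \<and> y \<in> Bot \<union> Top" using is_graph_edgeD[OF graph_G eG] sub by simp
  show "x \<in> Top \<Longrightarrow> y \<notin> Top" using Top_independent[OF eG] .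
  show "x \<in> Top \<Longrightarrow> y \<in> Bot \<Longrightarrow> weight y \<le> weight x" using weight_le_of_Top_edge[OF eG] .
next
  show "card {y\<in>Bot. weight y \<le> i} \<le> card {x\<in>Top. weight x < i} + 1" for i
    using card_Bot_weight_le_small card_Bot_weight_le_large by (cases "i < card NP") auto
qed (rule card_Bot_le_card_Top)

lemma edge_leaving_Bot_Top:
  assumes e: "{x, y} \<in> snd G" and x: "x \<in> Bot \<union> Top" and y: "y \<notin> Bot \<union> Top"
  shows "x \<in> NP"
proof -
  have "y \<in> fst T" "y \<notin> fst H" "y \<notin> P" "y \<notin> NP"
    using is_graph_edgeD[OF graph_G e] y Bot_Un_Top unfolding disj_union_def by auto
  then have eT: "{x, y} \<in> snd T" using edge_G_cases[OF e] edge_H by blast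
  then have "x \<in> P \<or> x \<in> NP" using x Bot_Un_Top is_graph_edgeD[OF graph_T eT] disjoint by blast
  then show ?thesis using T_edge_from_P[OF eT] \<open>y \<notin> NP\<close> by blast
qed

theorem tight_numbering_disj_union: "\<exists>f. tight_numbering (fst G) (snd G) f"
proof -
  define Rest where "Rest = fst T - P - NP"
  obtain f1 where f1: "tight_numbering (Bot \<union> Top) (snd (induced_subgraph G (Bot \<union> Top))) f1"
    and f1_Bot: "\<forall>x\<in>Bot. f1 x \<le> card Bot"
    using tight_numbering_Bot_Top by blast
  have "is_forest (induced_subgraph T Rest)"
    using forest unfolding Rest_def by (rule is_forest_induced_subgraph) auto
  then obtain f2 where f2: "tight_numbering Rest {e \<in> snd T. e \<subseteq> Rest} f2"
    using forest_tight_numbering unfolding induced_subgraph_def by fastforce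
  have V: "fst G = (Bot \<union> Top) \<union> Rest"
    using Bot_Un_Top P_subset NP_subset unfolding Rest_def disj_union_def by auto
  have disj: "(Bot \<union> Top) \<inter> Rest = {}" using Bot_Un_Top disjoint unfolding Rest_def by auto
  have "2 * card Bot \<le> card (Bot \<union> Top)"
    using card_Bot_le_card_Top Bot_Int_Top finite_Bot finite_Top by (simp add: card_Un_disjoint)
  moreover have "(x \<in> Bot \<union> Top \<and> y \<in> Bot \<union> Top \<and> f1 x + f1 y \<le> card (Bot \<union> Top) + 1
        \<and> (f1 x \<le> card Bot \<or> f1 y \<le> card Bot))
      \<or> (x \<in> Rest \<and> y \<in> Rest \<and> f2 x + f2 y \<le> card Rest + 1)
      \<or> (x \<in> Bot \<union> Top \<and> y \<in> Rest \<and> f1 x \<le> card Bot)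
      \<or> (x \<in> Rest \<and> y \<in> Bot \<union> Top \<and> f1 y \<le> card Bot)"
    if e: "{x, y} \<in> snd G" for x y
  proof -
    have xy: "x \<in> (Bot \<union> Top) \<union> Rest" "y \<in> (Bot \<union> Top) \<union> Rest"
      using is_graph_edgeD[OF graph_G e] V by auto
    consider "x \<in> Bot \<union> Top" "y \<in> Bot \<union> Top" | "x \<in> Rest" "y \<in> Rest"
      | "x \<in> Bot \<union> Top" "y \<in> Rest" | "x \<in> Rest" "y \<in> Bot \<union> Top"
      using xy by blast
    then show ?thesis
    proof cases
      case 1
      then have "{x, y} \<in> snd (induced_subgraph G (Bot \<union> Top))"
        using e unfolding induced_subgraph_def by simp
      moreover have "x \<in> Bot \<or> y \<in> Bot" using 1 Top_independent[OF e] by blast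
      ultimately show ?thesis using 1 f1 f1_Bot unfolding tight_numbering_def by blast
    next
      case 2
      then have "{x, y} \<in> snd T" using edge_G_cases[OF e] edge_H disjoint unfolding Rest_def by blast
      then show ?thesis using 2 f2 unfolding tight_numbering_def by simp
    next
      case 3
      then have "x \<in> NP" using edge_leaving_Bot_Top[OF e] 3 disj by blast
      then show ?thesis using 3 f1_Bot unfolding Bot_def by simp
    next
      case 4
      have "{y, x} \<in> snd G" using e by (simp add: insert_commute)
      then have "y \<in> NP" using edge_leaving_Bot_Top 4 disj by blast
      then show ?thesis using 4 f1_Bot unfolding Bot_def by simp
    qed
  qed
  ultimately show ?thesis
    using tight_numbering_splice[OF _ _ disj, of f1 f2 "card Bot" "snd G"] f1 f2 finite_Bot finite_Top
      finite_T V unfolding tight_numbering_def Rest_def by auto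
qed

end

theorem mainTheorem8:
  fixes H T :: "'a graph" and s :: nat and Gs :: "nat \<Rightarrow> 'a graph" and us :: "nat \<Rightarrow> 'a"
  assumes "is_graph H" and "fst H \<noteq> {}"
    and "1 \<le> min_deg H" and "min_deg H \<le> card (fst H) - 2"
    and "is_dseq H s Gs us"
    and "Zmin s Gs us \<le> 0"
    and "is_forest T" and "isolated T = {}" and "3 \<le> card (fst T)"
    and "fst H \<inter> fst T = {}"
    and "int (card (pendant_P T)) - int (card (nbhd_set T (pendant_P T)))
           \<ge> int (dval s Gs us 1) - Zmin s Gs us"
  shows "strength (disj_union H T) = card (fst (disj_union H T)) + 1"
proof -
  have "isolated H = {}" using assms(1,3) by (rule isolated_eq_empty_if_min_deg_pos)
  then interpret forest_extension H s Gs us T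
    using assms by unfold_locales auto
  obtain f where "tight_numbering (fst G) (snd G) f" using tight_numbering_disj_union by blast
  moreover have "isolated G = {}"
    using isolated_disj_union_subset[of H T] \<open>isolated H = {}\<close> assms(8) by blast
  moreover have "fst G \<noteq> {}" using assms(2) unfolding disj_union_def by simp
  ultimately show ?thesis using graph_G by (intro strength_eq_if_tight_numbering)
qed

end
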